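(* Let $q, q'\in\mathbb{N}_+$, and fix $p,n,\sigma,\vec u,W_i,\mathcal{L}_+,R$ as in the context. Then there exists $\varepsilon_0>0$ such that for every $\varepsilon$ with $0<\varepsilon<\varepsilon_0$, $\varepsilon<\frac{R-p}{2}$ and $\varepsilon^q<\frac{p^q(R^q-p^q)}{((n-1)(p-1)+1)^q}$, every basis $[\vec b_1,\dots,\vec b_n]$ of the lattice $\tilde{\mathcal{L}}=\tilde{\mathcal{L}}(\varepsilon)$ that minimizes $\sum_{i=1}^n\|\vec b_i\|_q^{q'}$ over all bases of $\tilde{\mathcal{L}}$ does not contain $\pm\vec v_1$, the shortest nonzero vector of $\tilde{\mathcal{L}}$.
   Context: Let $p\ge7$ be prime, $n\ge2$, $\sigma\in\{2,3\}^{n-1}$ with $\sum_{i=1}^{n-1}\sigma_i^q=p^q-1$ and $\|k\sigma\bmod p\|_q>\|\sigma\bmod p\|_q$ for all integers $k\not\equiv0,\pm1\pmod p$, where $|\alpha|_p=\min_{z\in\mathbb{Z}}|\alpha-zp|$ and $\|\vec x\bmod p\|_q=(\sum_i|x_i|_p^q)^{1/q}$; if $q\ge2$ assume $4n-3>2p$. Put $\vec u=(1,\sigma)\in\mathbb{R}^n$, $W_i=p\vec e_i$, $\mathcal{L}_+=\operatorname{span}_{\mathbb{Z}}(W_1,\dots,W_n,\vec u)$, and fix $R>p$ with $\mathcal{L}_+\cap\mathcal{B}_q(R)=\{\vec0,\pm W_1,\dots,\pm W_n,\pm\vec u\}$, where $\mathcal{B}_q(r)=\{\vec x:\|\vec x\|_q<r\}$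 and $\|\vec x\|_q=(\sum_i|x_i|^q)^{1/q}$. For $\varepsilon>0$, in $\mathbb{R}^{n+1}$ let $\vec v_1=(W_1,\varepsilon)$, $\vec v_i=(W_i,2\varepsilon)$ for $2\le i\le n$, $\tilde{\vec u}=\frac1p\sum_{i=1}^nu_i\vec v_i$, and $\tilde{\mathcal{L}}(\varepsilon)=\operatorname{span}_{\mathbb{Z}}(\vec v_1,\dots,\vec v_n,\tilde{\vec u})$. *)

theory Defs
  imports Complex_Main "HOL-Computational_Algebra.Primes"
begin

text \<open>Vectors of R^m are functions nat => real that vanish outside
  the coordinates 0..m-1 (0-indexed). Coordinate j (0-indexed) is the paper's
  coordinate j+1. For R^(n+1), coordinate n is the extra (epsilon) coordinate.\<close>

definition absp :: "nat \<Rightarrow> int \<Rightarrow> int" where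
  "absp p a = Inf {\<bar>a - z * int p\<bar> | z. True}"

definition modp_norm :: "nat \<Rightarrow> nat \<Rightarrow> nat \<Rightarrow> (nat \<Rightarrow> int) \<Rightarrow> real" where
  "modp_norm q p n s = (\<Sum>i=1..n-1. real_of_int (absp p (s i)) ^ q) powr (1 / real q)"

definition lq_norm :: "nat \<Rightarrow> nat \<Rightarrow> (nat \<Rightarrow> real) \<Rightarrow> real" where
  "lq_norm q m x = (\<Sum>j<m. \<bar>x j\<bar> ^ q) powr (1 / real q)"

definition zspan :: "nat \<Rightarrow> (nat \<Rightarrow> nat \<Rightarrow> real) \<Rightarrow> (nat \<Rightarrow> real) set" where
  "zspan m g = {(\<lambda>j. \<Sum>i<m. real_of_int (c i) * g i j) | c. True}"

definition lin_indep :: "nat \<Rightarrow> (nat \<Rightarrow> nat \<Rightarrow> real) \<Rightarrow> bool" where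
  "lin_indep m b \<longleftrightarrow> (\<forall>c::nat \<Rightarrow> real.
      (\<lambda>j. \<Sum>i<m. c i * b i j) = (\<lambda>j. 0) \<longrightarrow> (\<forall>i<m. c i = 0))"

definition is_basis :: "nat \<Rightarrow> (nat \<Rightarrow> real) set \<Rightarrow> (nat \<Rightarrow> nat \<Rightarrow> real) \<Rightarrow> bool" where
  "is_basis m L b \<longleftrightarrow> lin_indep m b \<and> zspan m b = L"

definition uvec :: "nat \<Rightarrow> (nat \<Rightarrow> int) \<Rightarrow> nat \<Rightarrow> real" where
  "uvec n s j = (if j = 0 then 1 else if j < n then real_of_int (s j) else 0)"

definition Wvec :: "nat \<Rightarrow> nat \<Rightarrow> nat \<Rightarrow> nat \<Rightarrow> real" where
  "Wvec p n i j = (if j = i \<and> j < n then real p else 0)"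

definition Lplus :: "nat \<Rightarrow> nat \<Rightarrow> (nat \<Rightarrow> int) \<Rightarrow> (nat \<Rightarrow> real) set" where
  "Lplus p n s = zspan (Suc n) (\<lambda>i. if i < n then Wvec p n i else uvec n s)"

definition vvec :: "nat \<Rightarrow> nat \<Rightarrow> real \<Rightarrow> nat \<Rightarrow> nat \<Rightarrow> real" where
  "vvec p n e i j = (if j < n then Wvec p n i j
                     else if j = n then (if i = 0 then e else 2 * e) else 0)"

definition utilde :: "nat \<Rightarrow> nat \<Rightarrow> (nat \<Rightarrow> int) \<Rightarrow> real \<Rightarrow> nat \<Rightarrow> real" where
  "utilde p n s e j = (1 / real p) * (\<Sum>i<n. uvec n s i * vvec p n e i j)"

definition Ltilde :: "nat \<Rightarrow> nat \<Rightarrow> (nat \<Rightarrow> int) \<Rightarrow> real \<Rightarrow> (nat \<Rightarrow> real) set" where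
  "Ltilde p n s e = zspan (Suc n) (\<lambda>i. if i < n then vvec p n e i else utilde p n s e)"

definition basis_cost :: "nat \<Rightarrow> nat \<Rightarrow> nat \<Rightarrow> (nat \<Rightarrow> nat \<Rightarrow> real) \<Rightarrow> real" where
  "basis_cost q q' n b = (\<Sum>i<n. lq_norm q (Suc n) (b i) ^ q')"

end

theory Submission
  imports Defs
begin

text \<open>
  Ltilde(\<epsilon>) is the image of L_+ under the injective linear map lift_eps, which appends the
  coordinate (\<epsilon>/p)(x_1 + 2(x_2 + ... + x_n)). By the hypothesis on R, the only nonzero vectors
  of L_+ of norm below R are \<plusminus>u and \<plusminus>W_i, all of norm p. Their lifts have last coordinate of
  absolute value at least \<epsilon>, with equality for \<plusminus>W_1, so v_1 = lift W_1 is a shortest vector.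

  A generating family of L_+ all of whose members are shorter than R must contain \<plusminus>u, since
  otherwise every vector of L_+ would have first coordinate divisible by p, and \<plusminus>W_i for every
  i \<ge> 2, since otherwise x_i \<equiv> \<sigma>_i x_1 (mod \<sigma>_i p) would hold throughout L_+. An n-element
  family containing \<plusminus>W_1 as well therefore has a member of norm at least R, so a basis of Ltilde
  containing \<plusminus>v_1 costs at least R^q' + (n-1) p^q'. The lift of the basis (u, W_2, ..., W_n) of
  L_+ costs n p^q' + o(1) as \<epsilon> \<rightarrow> 0, which is less.
\<close>

lemma zspanI: "x = (\<lambda>j. \<Sum>i<m. real_of_int (c i) * g i j) \<Longrightarrow> x \<in> zspan m g"
  unfolding zspan_def by auto

lemma zspanE:
  assumes "x \<in> zspan m g"
  obtains c where "x = (\<lambda>j. \<Sum>i<m. real_of_int (c i) * g i j)"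
  using assms unfolding zspan_def by auto

lemma zspan_cong: "(\<And>i. i < m \<Longrightarrow> g i = h i) \<Longrightarrow> zspan m g = zspan m h"
  unfolding zspan_def by (metis (no_types, lifting) lessThan_iff sum.cong)

lemma zspan_generator:
  assumes "i < m" shows "g i \<in> zspan m g"
proof (rule zspanI)
  show "g i = (\<lambda>j. \<Sum>k<m. real_of_int (of_bool (k = i)) * g k j)"
    using assms by simp
qed

lemma zspan_subset:
  assumes h: "\<And>i. i < m \<Longrightarrow> h i \<in> zspan m' g"
  shows "zspan m h \<subseteq> zspan m' g"
proof
  fix x assume "x \<in> zspan m h"
  then obtain c where c: "x = (\<lambda>j. \<Sum>i<m. real_of_int (c i) * h i j)" by (rule zspanE)
  have "\<forall>i. \<exists>d. i < m \<longrightarrow> h i = (\<lambda>j. \<Sum>k<m'. real_of_int (d k) * g k j)"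
    using h unfolding zspan_def by blast
  then obtain d where d: "\<And>i. i < m \<Longrightarrow> h i = (\<lambda>j. \<Sum>k<m'. real_of_int (d i k) * g k j)"
    by metis
  have "x = (\<lambda>j. \<Sum>k<m'. real_of_int (\<Sum>i<m. c i * d i k) * g k j)"
  proof
    fix j
    have "x j = (\<Sum>i<m. \<Sum>k<m'. real_of_int (c i) * real_of_int (d i k) * g k j)"
      unfolding c using d by (simp add: sum_distrib_left mult.assoc)
    also have "\<dots> = (\<Sum>k<m'. real_of_int (\<Sum>i<m. c i * d i k) * g k j)"
      by (subst sum.swap) (simp add: sum_distrib_right)
    finally show "x j = \<dots>" .
  qed
  then show "x \<in> zspan m' g" by (rule zspanI)
qed

lemma zspan_coord_congruence:
  assumes gen: "\<And>i. i < m \<Longrightarrow> \<exists>z::int. g i j1 - t * g i j0 = real_of_int z * c"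
    and x: "x \<in> zspan m g"
  shows "\<exists>z::int. x j1 - t * x j0 = real_of_int z * c"
proof -
  obtain a where a: "x = (\<lambda>j. \<Sum>i<m. real_of_int (a i) * g i j)" using x by (rule zspanE)
  obtain z where z: "\<And>i. i < m \<Longrightarrow> g i j1 - t * g i j0 = real_of_int (z i) * c"
    using gen by metis
  have "x j1 - t * x j0 = (\<Sum>i<m. real_of_int (a i) * (g i j1 - t * g i j0))"
    unfolding a by (simp add: sum_subtractf sum_distrib_left algebra_simps)
  also have "\<dots> = real_of_int (\<Sum>i<m. a i * z i) * c"
    using z by (simp add: sum_distrib_right mult.assoc)
  finally show ?thesis by blast
qed

lemma zspan_vanishing:
  assumes "\<And>i. i < m \<Longrightarrow> g i j = 0" and "x \<in> zspan m g"
  shows "x j = 0"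
  using zspan_coord_congruence[of m g j 0 j 0 x] assms by simp

lemma zspan_image:
  assumes "\<And>c. f (\<lambda>j. \<Sum>i<m. c i * g i j) = (\<lambda>j. \<Sum>i<m. c i * f (g i) j)"
  shows "zspan m (\<lambda>i. f (g i)) = f ` zspan m g"
proof -
  have "\<And>c. (\<lambda>j. \<Sum>i<m. real_of_int (c i) * f (g i) j) = f (\<lambda>j. \<Sum>i<m. real_of_int (c i) * g i j)"
    by (simp add: assms)
  then show ?thesis unfolding zspan_def by auto
qed

lemma is_basis_member: "is_basis m L b \<Longrightarrow> k < m \<Longrightarrow> b k \<in> L"
  unfolding is_basis_def using zspan_generator by blast

lemma is_basis_nonzero:
  assumes "is_basis m L b" "k < m" shows "b k \<noteq> (\<lambda>j. 0)"
proof
  assume bk: "b k = (\<lambda>j. 0)"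
  have "(\<lambda>j. \<Sum>i<m. of_bool (i = k) * b i j) = (\<lambda>j. 0)"
    using bk assms(2) by simp
  with assms show False unfolding is_basis_def lin_indep_def by fastforce
qed

lemma int_multiple_of_sign: "x = 0 \<or> x = c \<or> x = - c \<Longrightarrow> \<exists>z::int. x = real_of_int z * c"
  by (metis mult_zero_left mult_minus_left mult_1 of_int_0 of_int_1 of_int_minus)

lemma add_power_le_power_add:
  fixes a b :: real
  assumes "a \<ge> 0" "b \<ge> 0" "q \<ge> 1" shows "a ^ q + b ^ q \<le> (a + b) ^ q"
proof -
  obtain k where k: "q = Suc k" using assms(3) by (cases q) auto
  have "a * a ^ k + b * b ^ k \<le> a * (a + b) ^ k + b * (a + b) ^ k"
    using assms by (intro add_mono mult_left_mono power_mono) auto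
  then show ?thesis unfolding k by (simp add: algebra_simps)
qed

lemma lq_norm_nonneg: "0 \<le> lq_norm q m x"
  by (simp add: lq_norm_def)

lemma lq_norm_power:
  assumes q: "q \<ge> 1" shows "lq_norm q m x ^ q = (\<Sum>j<m. \<bar>x j\<bar> ^ q)"
proof -
  let ?S = "\<Sum>j<m. \<bar>x j\<bar> ^ q"
  have S: "?S \<ge> 0" by (intro sum_nonneg) auto
  then consider "?S = 0" | "?S > 0" by linarith
  then show ?thesis
  proof cases
    case 1
    with q show ?thesis by (simp add: lq_norm_def)
  next
    case 2
    then have "lq_norm q m x ^ q = (?S powr (1 / real q)) powr real q"
      unfolding lq_norm_def by (simp add: powr_realpow)
    also have "\<dots> = ?S" using q S by (simp add: powr_powr)
    finally show ?thesis .
  qed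
qed

lemma lq_norm_cong: "(\<And>j. j < m \<Longrightarrow> x j = y j) \<Longrightarrow> lq_norm q m x = lq_norm q m y"
  unfolding lq_norm_def by (metis (no_types, lifting) lessThan_iff sum.cong)

lemma lq_norm_uminus: "lq_norm q m (\<lambda>j. - x j) = lq_norm q m x"
  by (simp add: lq_norm_def)

lemma lq_norm_le_iff_power:
  "q \<ge> 1 \<Longrightarrow> lq_norm q m x \<le> lq_norm q m' y \<longleftrightarrow> lq_norm q m x ^ q \<le> lq_norm q m' y ^ q"
  by (simp add: power_mono_iff lq_norm_nonneg)

lemma lq_norm_eq_iff_power:
  "q \<ge> 1 \<Longrightarrow> a \<ge> 0 \<Longrightarrow> lq_norm q m x = a \<longleftrightarrow> lq_norm q m x ^ q = a ^ q"
  by (simp add: power_eq_iff_eq_base lq_norm_nonneg)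

lemma lq_norm_Suc_power:
  "q \<ge> 1 \<Longrightarrow> lq_norm q (Suc m) x ^ q = lq_norm q m x ^ q + \<bar>x m\<bar> ^ q"
  by (simp add: lq_norm_power)

lemma lq_norm_le_Suc: "q \<ge> 1 \<Longrightarrow> lq_norm q m x \<le> lq_norm q (Suc m) x"
  by (simp add: lq_norm_le_iff_power lq_norm_Suc_power)

lemma lq_norm_Wvec:
  assumes q: "q \<ge> 1" and i: "i < n" shows "lq_norm q n (Wvec p n i) = real p"
proof -
  have "(\<Sum>j<n. \<bar>Wvec p n i j\<bar> ^ q) = (\<Sum>j<n. if j = i then real p ^ q else 0)"
    using q by (intro sum.cong) (auto simp: Wvec_def)
  with i q show ?thesis by (simp add: lq_norm_eq_iff_power lq_norm_power)
qed

section \<open>Lifting L_+ to Ltilde\<close>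

definition lift_eps :: "nat \<Rightarrow> nat \<Rightarrow> real \<Rightarrow> (nat \<Rightarrow> real) \<Rightarrow> nat \<Rightarrow> real" where
  "lift_eps p n e y j =
     (if j < n then y j else if j = n then e / real p * (y 0 + 2 * (\<Sum>i\<in>{1..<n}. y i)) else 0)"

lemma lift_eps_linear:
  "lift_eps p n e (\<lambda>j. \<Sum>i<m. c i * g i j) = (\<lambda>j. \<Sum>i<m. c i * lift_eps p n e (g i) j)"
  by (rule ext) (auto simp: lift_eps_def sum_distrib_left sum.distrib algebra_simps intro: sum.swap)

lemma lift_eps_uminus: "lift_eps p n e (\<lambda>j. - y j) = (\<lambda>j. - lift_eps p n e y j)"
  by (rule ext) (simp add: lift_eps_def sum_negf minus_divide_left[symmetric] algebra_simps)

lemma lift_eps_zero: "lift_eps p n e (\<lambda>j. 0) = (\<lambda>j. 0)"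
  by (rule ext) (simp add: lift_eps_def)

lemma lift_eps_inj:
  assumes "lift_eps p n e x = lift_eps p n e y" "\<forall>j\<ge>n. x j = 0" "\<forall>j\<ge>n. y j = 0"
  shows "x = y"
proof
  fix j
  have "lift_eps p n e x j = lift_eps p n e y j" by (simp add: assms(1))
  then show "x j = y j" using assms(2,3) by (cases "j < n") (auto simp: lift_eps_def)
qed

lemma lq_norm_lift_eps_trunc: "lq_norm q n (lift_eps p n e y) = lq_norm q n y"
  by (rule lq_norm_cong) (simp add: lift_eps_def)

lemma lq_norm_lift_eps_power:
  "q \<ge> 1 \<Longrightarrow> lq_norm q (Suc n) (lift_eps p n e y) ^ q = lq_norm q n y ^ q + \<bar>lift_eps p n e y n\<bar> ^ q"
  by (simp add: lq_norm_Suc_power lq_norm_lift_eps_trunc)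

lemma lq_norm_le_lift_eps: "q \<ge> 1 \<Longrightarrow> lq_norm q n y \<le> lq_norm q (Suc n) (lift_eps p n e y)"
  using lq_norm_le_Suc[of q n "lift_eps p n e y"] by (simp add: lq_norm_lift_eps_trunc)

lemma tendsto_lq_norm_lift_eps:
  assumes q: "q \<ge> 1"
  shows "((\<lambda>e. lq_norm q (Suc n) (lift_eps p n e y)) \<longlongrightarrow> lq_norm q n y) (at_right 0)"
proof -
  have "((\<lambda>e. e / real p * c) \<longlongrightarrow> 0) (at_right 0)" for c
    by (intro tendsto_mult_left_zero tendsto_divide_zero tendsto_ident_at)
  then have coord: "((\<lambda>e. lift_eps p n e y j) \<longlongrightarrow> lift_eps p n 0 y j) (at_right 0)" for j
    by (simp add: lift_eps_def)
  have "((\<lambda>e. lq_norm q (Suc n) (lift_eps p n e y)) \<longlongrightarrow> lq_norm q (Suc n) (lift_eps p n 0 y)) (at_right 0)"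
    unfolding lq_norm_def using q
    by (intro tendsto_powr' tendsto_intros coord) (auto intro!: always_eventually add_nonneg_nonneg sum_nonneg)
  moreover have "lq_norm q (Suc n) (lift_eps p n 0 y) = lq_norm q n y"
    using q by (simp add: lq_norm_eq_iff_power lq_norm_nonneg lq_norm_lift_eps_power lift_eps_def)
  ultimately show ?thesis by simp
qed

lemma zspan_lift_eps: "zspan m (\<lambda>i. lift_eps p n e (g i)) = lift_eps p n e ` zspan m g"
  by (rule zspan_image) (rule lift_eps_linear)

lemma lin_indep_lift_eps:
  assumes van: "\<And>k j. k < m \<Longrightarrow> j \<ge> n \<Longrightarrow> g k j = 0" and ind: "lin_indep m g"
  shows "lin_indep m (\<lambda>k. lift_eps p n e (g k))"
  unfolding lin_indep_def
proof (intro allI impI)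
  fix c :: "nat \<Rightarrow> real" and k
  assume "(\<lambda>j. \<Sum>k<m. c k * lift_eps p n e (g k) j) = (\<lambda>j. 0)" and k: "k < m"
  then have "lift_eps p n e (\<lambda>j. \<Sum>k<m. c k * g k j) = lift_eps p n e (\<lambda>j. 0)"
    by (simp add: lift_eps_linear lift_eps_zero)
  then have "(\<lambda>j. \<Sum>k<m. c k * g k j) = (\<lambda>j. 0)"
    by (rule lift_eps_inj) (simp_all add: van)
  with ind k show "c k = 0" unfolding lin_indep_def by blast
qed

lemma zspan_eq_lift_eps_image:
  assumes van: "\<And>x j. x \<in> L \<Longrightarrow> j \<ge> n \<Longrightarrow> x j = 0"
    and b: "zspan m b = lift_eps p n e ` L"
  obtains y where "\<And>k. k < m \<Longrightarrow> b k = lift_eps p n e (y k) \<and> y k \<in> L" and "zspan m y = L"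
proof -
  have "\<forall>k. \<exists>y. k < m \<longrightarrow> b k = lift_eps p n e y \<and> y \<in> L"
    using zspan_generator[of _ m b] b by blast
  then obtain y where y: "\<And>k. k < m \<Longrightarrow> b k = lift_eps p n e (y k) \<and> y k \<in> L" by metis
  have images: "lift_eps p n e ` zspan m y = lift_eps p n e ` L"
    using b y zspan_cong[of m b "\<lambda>k. lift_eps p n e (y k)"] by (simp add: zspan_lift_eps)
  have "inj_on (lift_eps p n e) {x. \<forall>j\<ge>n. x j = 0}"
    by (auto intro: inj_onI lift_eps_inj)
  moreover have "zspan m y \<subseteq> {x. \<forall>j\<ge>n. x j = 0}"
    using y van by (auto intro: zspan_vanishing)
  moreover have "L \<subseteq> {x. \<forall>j\<ge>n. x j = 0}"
    using van by auto
  ultimately have "zspan m y = L"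
    using images by (simp add: inj_on_image_eq_iff)
  with y show thesis using that by blast
qed

definition plus_minus :: "(nat \<Rightarrow> real) \<Rightarrow> (nat \<Rightarrow> real) set" where
  "plus_minus x = {x, (\<lambda>j. - x j)}"

lemma abs_plus_minus: "y \<in> plus_minus x \<Longrightarrow> \<bar>y j\<bar> = \<bar>x j\<bar>"
  by (auto simp: plus_minus_def)

lemma lq_norm_plus_minus: "y \<in> plus_minus x \<Longrightarrow> lq_norm q m y = lq_norm q m x"
  by (auto simp: plus_minus_def lq_norm_uminus)

lemma lift_eps_plus_minus: "y \<in> plus_minus x \<Longrightarrow> lift_eps p n e y \<in> plus_minus (lift_eps p n e x)"
  by (auto simp: plus_minus_def lift_eps_uminus)

lemma Lplus_vanishing: "n > 0 \<Longrightarrow> x \<in> Lplus p n s \<Longrightarrow> j \<ge> n \<Longrightarrow> x j = 0"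
  unfolding Lplus_def by (erule zspan_vanishing[rotated]) (auto simp: Wvec_def uvec_def)

lemma uvec_in_Lplus: "uvec n s \<in> Lplus p n s"
  unfolding Lplus_def
  using zspan_generator[of n "Suc n" "\<lambda>i. if i < n then Wvec p n i else uvec n s"] by simp

lemma Wvec_in_Lplus: "i < n \<Longrightarrow> Wvec p n i \<in> Lplus p n s"
  unfolding Lplus_def
  using zspan_generator[of i "Suc n" "\<lambda>i. if i < n then Wvec p n i else uvec n s"] by simp

lemma vvec_eq_lift_eps:
  assumes "p > 0" "i < n" shows "vvec p n e i = lift_eps p n e (Wvec p n i)"
proof -
  have "(\<Sum>j\<in>{1..<n}. Wvec p n i j) = (if i = 0 then 0 else real p)"
    using assms by (simp add: Wvec_def)
  with assms show ?thesis
    by (intro ext) (auto simp: vvec_def lift_eps_def Wvec_def)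
qed

lemma utilde_eq_lift_eps:
  assumes p: "p > 0" and n: "n > 0" shows "utilde p n s e = lift_eps p n e (uvec n s)"
proof -
  have "utilde p n s e = (\<lambda>j. \<Sum>i<n. uvec n s i / real p * lift_eps p n e (Wvec p n i) j)"
    using p by (intro ext) (simp add: utilde_def vvec_eq_lift_eps sum_distrib_left)
  also have "\<dots> = lift_eps p n e (\<lambda>j. \<Sum>i<n. uvec n s i / real p * Wvec p n i j)"
    by (rule lift_eps_linear[symmetric])
  also have "(\<lambda>j. \<Sum>i<n. uvec n s i / real p * Wvec p n i j) = uvec n s"
  proof
    fix j
    have "(\<Sum>i<n. uvec n s i / real p * Wvec p n i j) = (\<Sum>i<n. if i = j then uvec n s j else 0)"
      using p by (intro sum.cong) (auto simp: Wvec_def)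
    then show "(\<Sum>i<n. uvec n s i / real p * Wvec p n i j) = uvec n s j"
      using n by (simp add: uvec_def)
  qed
  finally show ?thesis .
qed

lemma Ltilde_eq_lift_eps_image: "p > 0 \<Longrightarrow> n > 0 \<Longrightarrow> Ltilde p n s e = lift_eps p n e ` Lplus p n s"
  unfolding Ltilde_def Lplus_def zspan_lift_eps[symmetric]
  by (rule zspan_cong) (simp add: vvec_eq_lift_eps utilde_eq_lift_eps)

section \<open>Short vectors and generating families of L_+\<close>

locale sigma_lattice =
  fixes q p n :: nat and s :: "nat \<Rightarrow> int" and R :: real
  assumes q_pos: "q \<ge> 1" and p_gt1: "p > 1" and n_pos: "n \<ge> 1"
    and s_vals: "\<forall>i\<in>{1..n-1}. s i = 2 \<or> s i = 3"
    and s_sum: "(\<Sum>i=1..n-1. s i ^ q) = int p ^ q - 1"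
    and q_ge2: "q \<ge> 2 \<longrightarrow> 4 * n - 3 > 2 * p"
    and R_gt: "R > real p"
    and R_ball: "Lplus p n s \<inter> {x. lq_norm q n x < R} =
       {(\<lambda>j. 0), uvec n s, (\<lambda>j. - uvec n s j)} \<union> (\<Union>i<n. {Wvec p n i, (\<lambda>j. - Wvec p n i j)})"
begin

lemma p_pos: "p > 0"
  using p_gt1 by simp

lemma sigma_range: "j \<in> {1..<n} \<Longrightarrow> s j = 2 \<or> s j = 3"
  using s_vals by auto

lemma lq_norm_uvec: "lq_norm q n (uvec n s) = real p"
proof -
  have split: "{..<n} = insert 0 {1..<n}" and range: "{1..<n} = {1..n-1}" using n_pos by auto
  have "(\<Sum>j\<in>{1..<n}. \<bar>uvec n s j\<bar> ^ q) = (\<Sum>j\<in>{1..<n}. real_of_int (s j ^ q))"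
  proof (rule sum.cong)
    fix j assume "j \<in> {1..<n}"
    with sigma_range[of j] show "\<bar>uvec n s j\<bar> ^ q = real_of_int (s j ^ q)" by (auto simp: uvec_def)
  qed simp
  also have "\<dots> = real p ^ q - 1"
    unfolding range of_int_sum[symmetric] s_sum by simp
  finally have "(\<Sum>j<n. \<bar>uvec n s j\<bar> ^ q) = real p ^ q"
    unfolding split by (simp add: uvec_def)
  then show ?thesis using q_pos by (simp add: lq_norm_eq_iff_power lq_norm_power)
qed

lemma Lplus_short_cases:
  assumes "y \<in> Lplus p n s" "lq_norm q n y < R"
  shows "y = (\<lambda>j. 0) \<or> y \<in> plus_minus (uvec n s) \<or> (\<exists>i<n. y \<in> plus_minus (Wvec p n i))"
  using assms R_ball unfolding plus_minus_def by blast

lemma Lplus_nonzero_norm_ge: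
  assumes "y \<in> Lplus p n s" "y \<noteq> (\<lambda>j. 0)" shows "real p \<le> lq_norm q n y"
proof (cases "lq_norm q n y < R")
  case True
  with assms Lplus_short_cases
  consider "y \<in> plus_minus (uvec n s)" | i where "i < n" "y \<in> plus_minus (Wvec p n i)"
    by blast
  then show ?thesis
    using q_pos by cases (simp_all add: lq_norm_plus_minus lq_norm_uvec lq_norm_Wvec)
qed (use R_gt in auto)

definition plus_basis :: "nat \<Rightarrow> nat \<Rightarrow> real" where
  "plus_basis k = (if k = 0 then uvec n s else Wvec p n k)"

lemma plus_basis_in_Lplus: "k < n \<Longrightarrow> plus_basis k \<in> Lplus p n s"
  by (simp add: plus_basis_def uvec_in_Lplus Wvec_in_Lplus)

lemma lq_norm_plus_basis: "k < n \<Longrightarrow> lq_norm q n (plus_basis k) = real p"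
  using q_pos by (simp add: plus_basis_def lq_norm_uvec lq_norm_Wvec)

lemma plus_basis_vanishing: "j \<ge> n \<Longrightarrow> plus_basis k j = 0"
  using n_pos by (simp add: plus_basis_def uvec_def Wvec_def)

lemma plus_basis_combination:
  assumes j: "j < n"
  shows "(\<Sum>k<n. c k * plus_basis k j) = c 0 * uvec n s j + (if j = 0 then 0 else c j * real p)"
proof -
  have "(\<Sum>k\<in>{1..<n}. c k * plus_basis k j) = (\<Sum>k\<in>{1..<n}. if k = j then c j * real p else 0)"
    using j by (intro sum.cong) (auto simp: plus_basis_def Wvec_def)
  moreover have "{..<n} = insert 0 {1..<n}" using n_pos by auto
  ultimately show ?thesis using j by (simp add: plus_basis_def)
qed

lemma plus_basis_is_basis: "is_basis n (Lplus p n s) plus_basis"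
  unfolding is_basis_def
proof
  show "lin_indep n plus_basis"
    unfolding lin_indep_def
  proof (intro allI impI)
    fix c :: "nat \<Rightarrow> real" and k
    assume "(\<lambda>j. \<Sum>k<n. c k * plus_basis k j) = (\<lambda>j. 0)" and k: "k < n"
    then have comb: "c 0 * uvec n s j + (if j = 0 then 0 else c j * real p) = 0" if "j < n" for j
      using plus_basis_combination[OF that] by metis
    then have "c 0 = 0" using comb[of 0] n_pos by (simp add: uvec_def)
    with comb[OF k] p_pos show "c k = 0" by (cases "k = 0") auto
  qed
  show "zspan n plus_basis = Lplus p n s"
  proof
    show "zspan n plus_basis \<subseteq> Lplus p n s"
      unfolding Lplus_def by (rule zspan_subset) (simp add: plus_basis_in_Lplus[unfolded Lplus_def])
    have "Wvec p n 0 \<in> zspan n plus_basis"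
    proof (rule zspanI)
      let ?c = "\<lambda>k. if k = 0 then int p else - s k"
      show "Wvec p n 0 = (\<lambda>j. \<Sum>k<n. real_of_int (?c k) * plus_basis k j)"
      proof
        fix j show "Wvec p n 0 j = (\<Sum>k<n. real_of_int (?c k) * plus_basis k j)"
        proof (cases "j < n")
          case True
          then show ?thesis by (simp add: plus_basis_combination uvec_def Wvec_def)
        qed (simp add: plus_basis_vanishing Wvec_def)
      qed
    qed
    moreover have "uvec n s \<in> zspan n plus_basis"
      using zspan_generator[of 0 n plus_basis] n_pos by (simp add: plus_basis_def)
    moreover have "Wvec p n i \<in> zspan n plus_basis" if "0 < i" "i < n" for i
      using zspan_generator[of i n plus_basis] that by (simp add: plus_basis_def)
    ultimately show "Lplus p n s \<subseteq> zspan n plus_basis"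
      unfolding Lplus_def by (intro zspan_subset) (metis gr0I less_SucE)
  qed
qed

lemma abs_plus_basis_zero: "k < n \<Longrightarrow> \<bar>plus_basis k 0\<bar> = (if k = 0 then 1 else 0)"
  by (simp add: plus_basis_def uvec_def Wvec_def)

lemma plus_basis_abs_inj:
  assumes "i < n" "i' < n" and same: "\<And>j. \<bar>plus_basis i j\<bar> = \<bar>plus_basis i' j\<bar>"
  shows "i = i'"
proof (cases "i = 0 \<or> i' = 0")
  case True
  have "\<bar>plus_basis i 0\<bar> = \<bar>plus_basis i' 0\<bar>" by (rule same)
  with True assms(1,2) show ?thesis by (auto simp: abs_plus_basis_zero split: if_splits)
next
  case False
  have "\<bar>plus_basis i i\<bar> = \<bar>plus_basis i' i\<bar>" by (rule same)
  with False assms(1,2) p_pos show ?thesis by (auto simp: plus_basis_def Wvec_def split: if_splits)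
qed

lemma short_generating_family_contains_uvec:
  assumes span: "zspan m y = Lplus p n s" and short: "\<And>k. k < m \<Longrightarrow> lq_norm q n (y k) < R"
  shows "\<exists>k<m. y k \<in> plus_minus (uvec n s)"
proof (rule ccontr)
  assume none: "\<not> ?thesis"
  have "\<exists>z::int. y k 0 - 0 * y k 0 = real_of_int z * real p" if k: "k < m" for k
  proof -
    have "y k \<in> Lplus p n s" using zspan_generator[OF k, of y] span by simp
    with Lplus_short_cases short[OF k] none k
    have "y k = (\<lambda>j. 0) \<or> (\<exists>l<n. y k \<in> plus_minus (Wvec p n l))" by blast
    then show ?thesis by (intro int_multiple_of_sign) (auto simp: plus_minus_def Wvec_def)
  qed
  then obtain z :: int where "uvec n s 0 - 0 * uvec n s 0 = real_of_int z * real p"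
    using zspan_coord_congruence[of m y 0 0 0 "real p" "uvec n s"] uvec_in_Lplus span by blast
  then have "real_of_int (z * int p) = 1" by (simp add: uvec_def)
  then have "z * int p = 1" by (simp only: of_int_eq_1_iff)
  with p_gt1 show False by (auto simp: zmult_eq_1_iff)
qed

lemma short_generating_family_contains_Wvec:
  assumes span: "zspan m y = Lplus p n s" and short: "\<And>k. k < m \<Longrightarrow> lq_norm q n (y k) < R"
    and i: "i \<in> {1..<n}"
  shows "\<exists>k<m. y k \<in> plus_minus (Wvec p n i)"
proof (rule ccontr)
  assume none: "\<not> ?thesis"
  let ?t = "real_of_int (s i)"
  have "\<exists>z::int. y k i - ?t * y k 0 = real_of_int z * (?t * real p)" if k: "k < m" for k
  proof -
    have "y k \<in> Lplus p n s" using zspan_generator[OF k, of y] span by simp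
    with Lplus_short_cases short[OF k] none k
    have "y k = (\<lambda>j. 0) \<or> y k \<in> plus_minus (uvec n s) \<or> (\<exists>l<n. l \<noteq> i \<and> y k \<in> plus_minus (Wvec p n l))"
      by blast
    then show ?thesis using i by (intro int_multiple_of_sign) (auto simp: plus_minus_def Wvec_def uvec_def)
  qed
  then obtain z :: int where "Wvec p n i i - ?t * Wvec p n i 0 = real_of_int z * (?t * real p)"
    using zspan_coord_congruence[of m y i ?t 0 "?t * real p" "Wvec p n i"] Wvec_in_Lplus i span
    by auto
  then have "real_of_int (z * s i) * real p = 1 * real p" using i by (simp add: Wvec_def algebra_simps)
  then have "real_of_int (z * s i) = 1" using p_pos by simp
  then have "z * s i = 1" by (simp only: of_int_eq_1_iff)
  with sigma_range[OF i] show False by (auto simp: zmult_eq_1_iff)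
qed

lemma short_generating_family_contains_plus_basis:
  assumes "zspan m y = Lplus p n s" "\<And>k. k < m \<Longrightarrow> lq_norm q n (y k) < R" "i < n"
  shows "\<exists>k<m. y k \<in> plus_minus (plus_basis i)"
  using assms short_generating_family_contains_uvec short_generating_family_contains_Wvec
  by (cases "i = 0") (simp_all add: plus_basis_def)

lemma generating_family_with_Wvec0_has_long_member:
  assumes span: "zspan n y = Lplus p n s" and k0: "k0 < n" "y k0 \<in> plus_minus (Wvec p n 0)"
  shows "\<exists>k<n. R \<le> lq_norm q n (y k)"
proof (rule ccontr)
  assume "\<not> ?thesis"
  then have "\<forall>i. \<exists>k. i < n \<longrightarrow> k < n \<and> y k \<in> plus_minus (plus_basis i)"
    using short_generating_family_contains_plus_basis[OF span] by (meson not_le)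
  then obtain \<kappa> where \<kappa>: "\<And>i. i < n \<Longrightarrow> \<kappa> i < n \<and> y (\<kappa> i) \<in> plus_minus (plus_basis i)"
    by metis
  have "inj_on \<kappa> {..<n}"
  proof (rule inj_onI)
    fix i i' assume i: "i \<in> {..<n}" and i': "i' \<in> {..<n}" and same: "\<kappa> i = \<kappa> i'"
    have "\<bar>plus_basis i j\<bar> = \<bar>plus_basis i' j\<bar>" for j
      using abs_plus_minus[OF conjunct2[OF \<kappa>]] i i' same by (metis lessThan_iff)
    with i i' show "i = i'" by (intro plus_basis_abs_inj) simp_all
  qed
  \<comment> \<open>so \<plusminus>u, \<plusminus>W_2, ..., \<plusminus>W_n fill all n slots, leaving none for \<plusminus>W_1\<close>
  then have "\<kappa> ` {..<n} = {..<n}"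
    using \<kappa> by (intro endo_inj_surj) auto
  with k0 obtain i where i: "i < n" and "\<kappa> i = k0" by (metis imageE lessThan_iff)
  then have "\<bar>plus_basis i 0\<bar> = \<bar>Wvec p n 0 0\<bar>"
    using abs_plus_minus[OF conjunct2[OF \<kappa>[OF i]]] abs_plus_minus[OF k0(2)] by simp
  then have "\<bar>plus_basis i 0\<bar> = real p"
    using n_pos by (simp add: Wvec_def)
  with i p_gt1 show False by (simp add: abs_plus_basis_zero split: if_splits)
qed

subsection \<open>Shortest vectors and optimal bases of Ltilde\<close>

lemma sigma_sum_lower_bound: "real p \<le> 1 + 2 * (\<Sum>j\<in>{1..<n}. real_of_int (s j))"
proof (cases "q = 1")
  case True
  have "{1..<n} = {1..n-1}" using n_pos by auto
  then have "(\<Sum>j\<in>{1..<n}. real_of_int (s j)) = real p - 1"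
    using arg_cong[OF s_sum, of real_of_int] True p_pos by simp
  then show ?thesis using p_pos by simp
next
  case False
  have "(\<Sum>j\<in>{1..<n}. 2) \<le> (\<Sum>j\<in>{1..<n}. real_of_int (s j))"
    by (intro sum_mono) (use sigma_range in force)
  moreover have "2 * real p < 4 * real n - 3"
    using q_ge2 False q_pos n_pos by linarith
  ultimately show ?thesis using n_pos by (simp add: of_nat_diff)
qed

lemma Ltilde_eq: "Ltilde p n s e = lift_eps p n e ` Lplus p n s"
  using Ltilde_eq_lift_eps_image p_pos n_pos by simp

lemma lift_eps_short_last_coord_ge:
  assumes e: "e \<ge> 0" and y: "y \<in> plus_minus (uvec n s) \<or> (\<exists>i<n. y \<in> plus_minus (Wvec p n i))"
  shows "e \<le> \<bar>lift_eps p n e y n\<bar>"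
proof -
  have sum_u: "(\<Sum>j\<in>{1..<n}. uvec n s j) = (\<Sum>j\<in>{1..<n}. real_of_int (s j))"
    by (intro sum.cong) (auto simp: uvec_def)
  have "e * real p \<le> e * (1 + 2 * (\<Sum>j\<in>{1..<n}. real_of_int (s j)))"
    using e sigma_sum_lower_bound by (intro mult_left_mono)
  then have u: "e \<le> \<bar>lift_eps p n e (uvec n s) n\<bar>"
    using e p_pos sigma_sum_lower_bound by (simp add: lift_eps_def uvec_def sum_u field_simps)
  have W: "e \<le> \<bar>lift_eps p n e (Wvec p n i) n\<bar>" if "i < n" for i
    using e that p_pos by (simp add: vvec_eq_lift_eps[symmetric] vvec_def)
  from y u W show ?thesis
    using abs_plus_minus[OF lift_eps_plus_minus] by metis
qed

lemma Ltilde_nonzero_norm_ge: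
  assumes x: "x \<in> Ltilde p n s e" "x \<noteq> (\<lambda>j. 0)"
  shows "real p \<le> lq_norm q (Suc n) x"
proof -
  obtain y where y: "y \<in> Lplus p n s" "x = lift_eps p n e y" using x Ltilde_eq by auto
  with x have "y \<noteq> (\<lambda>j. 0)" by (auto simp: lift_eps_zero)
  with y have "real p \<le> lq_norm q n y" by (intro Lplus_nonzero_norm_ge)
  also have "\<dots> \<le> lq_norm q (Suc n) x" using y q_pos by (simp add: lq_norm_le_lift_eps)
  finally show ?thesis .
qed

lemma vvec0_shortest:
  assumes e: "0 < e" "e < R - real p" and x: "x \<in> Ltilde p n s e" "x \<noteq> (\<lambda>j. 0)"
  shows "lq_norm q (Suc n) (vvec p n e 0) \<le> lq_norm q (Suc n) x"
proof -
  obtain y where y: "y \<in> Lplus p n s" "x = lift_eps p n e y" using x Ltilde_eq by auto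
  with x have y0: "y \<noteq> (\<lambda>j. 0)" by (auto simp: lift_eps_zero)
  have v: "vvec p n e 0 = lift_eps p n e (Wvec p n 0)"
    using p_pos n_pos by (simp add: vvec_eq_lift_eps)
  have "lq_norm q (Suc n) (vvec p n e 0) ^ q = real p ^ q + e ^ q"
  proof -
    have "lift_eps p n e (Wvec p n 0) n = e" using fun_cong[OF v, of n] by (simp add: vvec_def)
    then show ?thesis unfolding v using q_pos n_pos e by (simp add: lq_norm_lift_eps_power lq_norm_Wvec)
  qed
  also have "\<dots> \<le> lq_norm q (Suc n) x ^ q"
  proof (cases "lq_norm q n y < R")
    case True
    then have short: "y \<in> plus_minus (uvec n s) \<or> (\<exists>i<n. y \<in> plus_minus (Wvec p n i))"
      using Lplus_short_cases y(1) y0 by blast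
    then have "lq_norm q n y = real p"
      using q_pos by (auto simp: lq_norm_plus_minus lq_norm_uvec lq_norm_Wvec)
    moreover have "e ^ q \<le> \<bar>lift_eps p n e y n\<bar> ^ q"
      using lift_eps_short_last_coord_ge[OF _ short] e by (intro power_mono) auto
    ultimately show ?thesis using y q_pos by (simp add: lq_norm_lift_eps_power)
  next
    case False
    have "real p ^ q + e ^ q \<le> (real p + e) ^ q" using e q_pos by (intro add_power_le_power_add) auto
    also have "\<dots> \<le> lq_norm q n y ^ q" using e False by (intro power_mono) auto
    also have "\<dots> \<le> lq_norm q (Suc n) x ^ q"
      using y q_pos by (intro power_mono) (simp_all add: lq_norm_nonneg lq_norm_le_lift_eps)
    finally show ?thesis .
  qed
  finally show ?thesis using q_pos by (simp add: lq_norm_le_iff_power)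
qed

lemma lift_plus_basis_is_basis: "is_basis n (Ltilde p n s e) (\<lambda>k. lift_eps p n e (plus_basis k))"
  using plus_basis_is_basis lin_indep_lift_eps[where m=n and g=plus_basis] plus_basis_vanishing
  by (simp add: is_basis_def zspan_lift_eps Ltilde_eq)

lemma basis_cost_ge_if_contains_vvec0:
  assumes b: "is_basis n (Ltilde p n s e) b" and i0: "i0 < n" "b i0 \<in> plus_minus (vvec p n e 0)"
  shows "R ^ q' + real (n - 1) * real p ^ q' \<le> basis_cost q q' n b"
proof -
  have van: "\<And>x j. x \<in> Lplus p n s \<Longrightarrow> j \<ge> n \<Longrightarrow> x j = 0"
    using Lplus_vanishing[of n] n_pos by simp
  have "zspan n b = lift_eps p n e ` Lplus p n s"
    using b Ltilde_eq by (simp add: is_basis_def)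
  then obtain y where y: "\<And>k. k < n \<Longrightarrow> b k = lift_eps p n e (y k) \<and> y k \<in> Lplus p n s"
    and span: "zspan n y = Lplus p n s"
    using zspan_eq_lift_eps_image[where n=n and L="Lplus p n s" and m=n and b=b] van by blast
  have W0: "vvec p n e 0 = lift_eps p n e (Wvec p n 0)"
    using p_pos n_pos by (simp add: vvec_eq_lift_eps)
  from i0(2) obtain w where w: "w \<in> plus_minus (Wvec p n 0)" "b i0 = lift_eps p n e w"
    unfolding W0 plus_minus_def lift_eps_uminus[symmetric] by blast
  have "lift_eps p n e (y i0) = lift_eps p n e w" using y[OF i0(1)] w(2) by simp
  moreover have "\<forall>j\<ge>n. y i0 j = 0" using y[OF i0(1)] van by blast
  moreover have "\<forall>j\<ge>n. w j = 0" using w(1) by (auto simp: plus_minus_def Wvec_def)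
  ultimately have "y i0 = w" by (rule lift_eps_inj)
  with w(1) have "y i0 \<in> plus_minus (Wvec p n 0)" by simp
  then obtain k1 where k1: "k1 < n" "R \<le> lq_norm q n (y k1)"
    using generating_family_with_Wvec0_has_long_member[OF span i0(1)] by blast
  then have "R \<le> lq_norm q (Suc n) (b k1)"
    using y[OF k1(1)] q_pos lq_norm_le_lift_eps[of q n "y k1" p e] by auto
  then have long: "R ^ q' \<le> lq_norm q (Suc n) (b k1) ^ q'"
    using R_gt p_pos by (intro power_mono) auto
  have "real p ^ q' \<le> lq_norm q (Suc n) (b k) ^ q'" if "k < n" for k
    using Ltilde_nonzero_norm_ge is_basis_member[OF b that] is_basis_nonzero[OF b that]
    by (intro power_mono) auto
  then have rest:
    "real (n - 1) * real p ^ q' \<le> (\<Sum>k\<in>{..<n} - {k1}. lq_norm q (Suc n) (b k) ^ q')"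
    using k1(1) sum_bounded_below[of "{..<n} - {k1}" "real p ^ q'"] by simp
  have "basis_cost q q' n b =
      lq_norm q (Suc n) (b k1) ^ q' + (\<Sum>k\<in>{..<n} - {k1}. lq_norm q (Suc n) (b k) ^ q')"
    unfolding basis_cost_def using k1(1) by (simp add: sum.remove)
  with long rest show ?thesis by linarith
qed

lemma tendsto_basis_cost_lift_plus_basis:
  "((\<lambda>e. basis_cost q q' n (\<lambda>k. lift_eps p n e (plus_basis k))) \<longlongrightarrow> real n * real p ^ q') (at_right 0)"
proof -
  have "((\<lambda>e. basis_cost q q' n (\<lambda>k. lift_eps p n e (plus_basis k)))
          \<longlongrightarrow> (\<Sum>k<n. lq_norm q n (plus_basis k) ^ q')) (at_right 0)"
    unfolding basis_cost_def using q_pos by (intro tendsto_sum tendsto_power tendsto_lq_norm_lift_eps)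
  then show ?thesis by (simp add: lq_norm_plus_basis)
qed

lemma eventually_optimal_basis_avoids_vvec0:
  assumes q': "q' \<ge> 1"
  shows "\<forall>\<^sub>F e in at_right 0. \<forall>b. is_basis n (Ltilde p n s e) b \<and>
           (\<forall>b'. is_basis n (Ltilde p n s e) b' \<longrightarrow> basis_cost q q' n b \<le> basis_cost q q' n b')
         \<longrightarrow> (\<forall>i<n. b i \<notin> plus_minus (vvec p n e 0))"
proof -
  have "real p ^ q' < R ^ q'"
    using R_gt q' by (intro power_strict_mono) auto
  then have "real n * real p ^ q' < R ^ q' + real (n - 1) * real p ^ q'"
    using n_pos by (simp add: of_nat_diff algebra_simps)
  with tendsto_basis_cost_lift_plus_basis
  have "\<forall>\<^sub>F e in at_right 0. basis_cost q q' n (\<lambda>k. lift_eps p n e (plus_basis k))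
                             < R ^ q' + real (n - 1) * real p ^ q'"
    by (rule order_tendstoD)
  then show ?thesis
  proof (rule eventually_mono, intro allI impI notI)
    fix e b i
    assume small: "basis_cost q q' n (\<lambda>k. lift_eps p n e (plus_basis k))
                     < R ^ q' + real (n - 1) * real p ^ q'"
      and opt: "is_basis n (Ltilde p n s e) b \<and>
           (\<forall>b'. is_basis n (Ltilde p n s e) b' \<longrightarrow> basis_cost q q' n b \<le> basis_cost q q' n b')"
      and i: "i < n" and bi: "b i \<in> plus_minus (vvec p n e 0)"
    have "R ^ q' + real (n - 1) * real p ^ q' \<le> basis_cost q q' n b"
      using basis_cost_ge_if_contains_vvec0 opt i bi by blast
    also have "\<dots> \<le> basis_cost q q' n (\<lambda>k. lift_eps p n e (plus_basis k))"
      using opt lift_plus_basis_is_basis by blast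
    finally show False using small by simp
  qed
qed

end

theorem corollary4p8:
  fixes q q' p n :: nat and s :: "nat \<Rightarrow> int" and R :: real
  assumes q_pos: "q \<ge> 1" and q'_pos: "q' \<ge> 1"
    and p_prime: "prime p" and p_ge: "p \<ge> 7" and n_ge: "n \<ge> 2"
    and s_vals: "\<forall>i\<in>{1..n-1}. s i = 2 \<or> s i = 3"
    and s_sum: "(\<Sum>i=1..n-1. s i ^ q) = int p ^ q - 1"
    and s_mod: "\<forall>k::int. k mod int p \<noteq> 0 \<and> k mod int p \<noteq> 1 \<and> k mod int p \<noteq> int p - 1
                 \<longrightarrow> modp_norm q p n (\<lambda>i. k * s i) > modp_norm q p n s"
    and q_ge2: "q \<ge> 2 \<longrightarrow> 4 * n - 3 > 2 * p"
    and R_gt: "R > real p"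
    and R_ball: "Lplus p n s \<inter> {x. lq_norm q n x < R} =
       {(\<lambda>j. 0), uvec n s, (\<lambda>j. - uvec n s j)} \<union>
       (\<Union>i<n. {Wvec p n i, (\<lambda>j. - Wvec p n i j)})"
  shows "\<exists>e0>0. \<forall>e::real. 0 < e \<and> e < e0 \<and> e < (R - real p) / 2 \<and>
            e ^ q < real p ^ q * (R ^ q - real p ^ q) / (real ((n - 1) * (p - 1) + 1)) ^ q
          \<longrightarrow> (vvec p n e 0 \<in> Ltilde p n s e \<and>
               (\<forall>x\<in>Ltilde p n s e. x \<noteq> (\<lambda>j. 0) \<longrightarrow>
                   lq_norm q (Suc n) (vvec p n e 0) \<le> lq_norm q (Suc n) x)) \<and>
              (\<forall>b. is_basis n (Ltilde p n s e) b \<and>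
                   (\<forall>b'. is_basis n (Ltilde p n s e) b' \<longrightarrow> basis_cost q q' n b \<le> basis_cost q q' n b')
                 \<longrightarrow> (\<forall>i<n. b i \<noteq> vvec p n e 0 \<and> b i \<noteq> (\<lambda>j. - vvec p n e 0 j)))"
proof -
  interpret sigma_lattice q p n s R
    using q_pos p_ge n_ge s_vals s_sum q_ge2 R_gt R_ball by unfold_locales auto
  obtain e0 where "e0 > 0" and avoid: "\<And>e. 0 < e \<Longrightarrow> e < e0 \<Longrightarrow>
      \<forall>b. is_basis n (Ltilde p n s e) b \<and>
          (\<forall>b'. is_basis n (Ltilde p n s e) b' \<longrightarrow> basis_cost q q' n b \<le> basis_cost q q' n b')
        \<longrightarrow> (\<forall>i<n. b i \<notin> plus_minus (vvec p n e 0))"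
    using eventually_optimal_basis_avoids_vvec0[OF q'_pos] by (auto simp: eventually_at_right_field)
  have "vvec p n e 0 \<in> Ltilde p n s e" for e
    using vvec_eq_lift_eps[of p 0 n e] p_pos n_pos Wvec_in_Lplus[of 0 n p s] by (simp add: Ltilde_eq)
  with \<open>e0 > 0\<close> avoid vvec0_shortest R_gt show ?thesis
    by (intro exI[of _ e0]) (auto simp: plus_minus_def)
qed

end
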